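(* Let $n \ge 2$ and let $K, L$ be compact convex subsets of $\mathbb{R}^n$ such that, for every unit vector $u$, the projection $L_u$ contains a translate of $K_u$. Then $$V_n(K) \le \left(\tfrac{n}{n-1}\right)^n V_n(L).$$
   Context: For a set $S \subseteq \mathbb{R}^n$ and a unit vector $u$, $S_u$ denotes the orthogonal projection of $S$ onto $u^\perp$. "$A$ contains a translate of $B$" means $B+w\subseteq A$ for some vector $w$. $V_n$ is $n$-dimensional volume. *)

theory Defs
  imports "HOL-Analysis.Analysis"
begin

definition proj_perp :: "'a::euclidean_space \<Rightarrow> 'a set \<Rightarrow> 'a set" where
  "proj_perp u S = (\<lambda>x. x - (x \<bullet> u) *\<^sub>R u) ` S"

end

theory Submission
  imports Defs
begin

(* With
   c = n/(n-1) we show that K lies in a homothetic copy c L + x of L, whence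
   V(K) <= c^n V(L).

   The covering is assembled with Helly's theorem from finite subsets F of K with |F| <= n+1.
   For such F a Brouwer fixed point gives a point x and, for every p in F, a point y_p of L
   nearest to (p - x)/c, such that the residuals r_p = p - x - c y_p sum to zero; each r_p is
   an outer normal of L at y_p.  Pairing the r_p with the points p through the shadow
   hypothesis (in a direction u orthogonal to n of the residuals, possibly after a
   leave-one-out averaging) bounds  sum r_p.p  by  c sum r_p.y_p,  while expanding the
   definition of r_p shows that the difference is  sum |r_p|^2.  Hence every r_p vanishes,
   i.e. p = c y_p + x. *)

(* At most n vectors summing to zero span a proper subspace, so some unit vector is orthogonal
   to all of them; this is the direction in which the shadow hypothesis gets applied. *)
lemma unit_orthogonal_to_zero_sum:
  fixes z :: "'b \<Rightarrow> 'a::euclidean_space"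
  assumes "finite J" "card J \<le> DIM('a)" "(\<Sum>i\<in>J. z i) = 0"
  shows "\<exists>u. norm u = 1 \<and> (\<forall>i\<in>J. z i \<bullet> u = 0)"
proof (cases "J = {}")
  case True
  obtain b :: 'a where "b \<in> Basis" using nonempty_Basis by blast
  then show ?thesis using True norm_Basis by blast
next
  case False
  then obtain j where j: "j \<in> J" by blast
  have zj: "z j = - (\<Sum>i\<in>J-{j}. z i)"
    using assms(1,3) j by (simp add: sum_diff1 eq_neg_iff_add_eq_0)
  have "z ` J \<subseteq> span (z ` (J - {j}))"
  proof
    fix v assume "v \<in> z ` J"
    then obtain i where i: "i \<in> J" "v = z i" by blast
    have "(\<Sum>i\<in>J-{j}. z i) \<in> span (z ` (J - {j}))"
      by (intro span_sum) (auto intro: span_base)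
    then show "v \<in> span (z ` (J - {j}))"
      using i zj by (cases "i = j") (auto intro: span_base simp: span_neg)
  qed
  then have "dim (z ` J) \<le> card (z ` (J - {j}))"
    using assms(1) by (intro dim_le_card) auto
  also have "\<dots> \<le> card (J - {j})" using assms(1) by (intro card_image_le) auto
  also have "\<dots> < DIM('a)" using assms(1,2) j card_gt_0_iff[of J] by auto
  finally obtain x :: 'a where x: "x \<noteq> 0" "\<And>y. y \<in> span (z ` J) \<Longrightarrow> orthogonal x y"
    by (rule orthogonal_to_subspace_exists) blast
  have "z i \<bullet> x = 0" if "i \<in> J" for i
    using x(2)[OF span_base, of "z i"] that by (simp add: orthogonal_def inner_commute)
  then have "\<forall>i\<in>J. z i \<bullet> (x /\<^sub>R norm x) = 0" by simp
  moreover have "norm (x /\<^sub>R norm x) = 1" using x(1) by simp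
  ultimately show ?thesis by blast
qed

lemma shadow_translate_inner:
  assumes "(\<lambda>x. x + w) ` proj_perp u K \<subseteq> proj_perp u L" "z \<bullet> u = 0" "k \<in> K"
  shows "\<exists>y\<in>L. z \<bullet> (k + w) = z \<bullet> y"
proof -
  have "k - (k \<bullet> u) *\<^sub>R u + w \<in> proj_perp u L"
    using assms(1,3) unfolding proj_perp_def by blast
  then obtain y where "y \<in> L" "k - (k \<bullet> u) *\<^sub>R u + w = y - (y \<bullet> u) *\<^sub>R u"
    unfolding proj_perp_def by blast
  moreover from this(2) have "z \<bullet> (k - (k \<bullet> u) *\<^sub>R u + w) = z \<bullet> (y - (y \<bullet> u) *\<^sub>R u)"
    by simp
  then have "z \<bullet> (k + w) = z \<bullet> y"
    using assms(2) by (simp add: inner_diff_right inner_add_right)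
  ultimately show ?thesis by blast
qed

(* The translation vector w drops out because the z_i sum to zero. *)
lemma zero_sum_shadow_bound:
  fixes K L :: "'a::euclidean_space set" and z k :: "'b \<Rightarrow> 'a"
  assumes shadow: "\<And>u. norm u = 1 \<Longrightarrow> \<exists>w. (\<lambda>x. x + w) ` proj_perp u K \<subseteq> proj_perp u L"
    and J: "finite J" "card J \<le> DIM('a)" and zero_sum: "(\<Sum>i\<in>J. z i) = 0"
    and kK: "\<And>i. i \<in> J \<Longrightarrow> k i \<in> K"
    and bound: "\<And>i y. i \<in> J \<Longrightarrow> y \<in> L \<Longrightarrow> z i \<bullet> y \<le> b i"
  shows "(\<Sum>i\<in>J. z i \<bullet> k i) \<le> (\<Sum>i\<in>J. b i)"
proof -
  obtain u where u: "norm u = 1" "\<forall>i\<in>J. z i \<bullet> u = 0"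
    using unit_orthogonal_to_zero_sum[OF J zero_sum] by blast
  obtain w where w: "(\<lambda>x. x + w) ` proj_perp u K \<subseteq> proj_perp u L"
    using shadow[OF u(1)] by blast
  have "z i \<bullet> (k i + w) \<le> b i" if "i \<in> J" for i
    using shadow_translate_inner[OF w _ kK] u(2) bound that by metis
  then have "(\<Sum>i\<in>J. z i \<bullet> (k i + w)) \<le> (\<Sum>i\<in>J. b i)"
    by (rule sum_mono)
  also have "(\<Sum>i\<in>J. z i \<bullet> (k i + w)) = (\<Sum>i\<in>J. z i \<bullet> k i) + (\<Sum>i\<in>J. z i) \<bullet> w"
    by (simp add: inner_add_right sum.distrib inner_sum_left)
  finally show ?thesis using zero_sum by simp
qed

(* This is the source of the factor n/(n-1). *)
lemma leave_one_out_average: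
  fixes r k :: "'b \<Rightarrow> 'a::real_inner" and n Y :: real
  assumes I: "finite I" "real (card I) = n + 1" and n: "n > 1"
    and zero_sum: "(\<Sum>i\<in>I. r i) = 0"
    and bound: "\<And>j. j \<in> I \<Longrightarrow> (\<Sum>i\<in>I-{j}. (r i + (1/n) *\<^sub>R r j) \<bullet> k i) \<le> Y"
  shows "(\<Sum>i\<in>I. r i \<bullet> k i) \<le> n / (n - 1) * Y"
proof -
  define A where "A = (\<Sum>i\<in>I. r i \<bullet> k i)"
  have leave_out: "(\<Sum>i\<in>I-{j}. (r i + (1/n) *\<^sub>R r j) \<bullet> k i)
      = A + (1/n) * (r j \<bullet> (\<Sum>i\<in>I. k i)) - (1 + 1/n) * (r j \<bullet> k j)" if "j \<in> I" for j
  proof -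
    have "(\<Sum>i\<in>I-{j}. (r i + (1/n) *\<^sub>R r j) \<bullet> k i)
        = (\<Sum>i\<in>I. (r i + (1/n) *\<^sub>R r j) \<bullet> k i) - (r j + (1/n) *\<^sub>R r j) \<bullet> k j"
      using I(1) that by (simp add: sum_diff1)
    also have "(\<Sum>i\<in>I. (r i + (1/n) *\<^sub>R r j) \<bullet> k i) = A + (1/n) * (r j \<bullet> (\<Sum>i\<in>I. k i))"
      unfolding A_def by (simp add: inner_add_left sum.distrib inner_sum_right sum_distrib_left)
    finally show ?thesis by (simp add: inner_add_left algebra_simps)
  qed
  have "(n - 1/n) * A = (n + 1) * A + (1/n) * ((\<Sum>j\<in>I. r j) \<bullet> (\<Sum>i\<in>I. k i)) - (1 + 1/n) * A"
    using zero_sum by (simp add: algebra_simps)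
  also have "\<dots> = (\<Sum>j\<in>I. A + (1/n) * (r j \<bullet> (\<Sum>i\<in>I. k i)) - (1 + 1/n) * (r j \<bullet> k j))"
    using I(2) unfolding A_def
    by (simp add: sum_subtractf sum.distrib sum_distrib_left inner_sum_left)
  also have "\<dots> = (\<Sum>j\<in>I. \<Sum>i\<in>I-{j}. (r i + (1/n) *\<^sub>R r j) \<bullet> k i)"
    using leave_out by simp
  also have "\<dots> \<le> (\<Sum>j\<in>I. Y)" using bound by (rule sum_mono)
  also have "\<dots> = (n + 1) * Y" using I(2) by simp
  finally have "(n + 1) * ((n - 1) / n * A) \<le> (n + 1) * Y"
    using n by (simp add: field_simps)
  then have "(n - 1) / n * A \<le> Y" using n by (subst (asm) mult_le_cancel_left_pos) auto
  then show ?thesis using n unfolding A_def by (simp add: field_simps)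
qed

lemma closest_point_outer_normal:
  fixes L :: "'a::euclidean_space set" and a y' :: 'a and c :: real
  assumes "convex L" "closed L" "c > 0" "y' \<in> L"
  defines "y \<equiv> closest_point L ((1/c) *\<^sub>R a)"
  shows "(a - c *\<^sub>R y) \<bullet> y' \<le> (a - c *\<^sub>R y) \<bullet> y"
proof -
  have "((1/c) *\<^sub>R a - y) \<bullet> (y' - y) \<le> 0"
    unfolding y_def using closest_point_dot[OF assms(1,2,4)] .
  moreover have "a - c *\<^sub>R y = c *\<^sub>R ((1/c) *\<^sub>R a - y)"
    using assms(3) by (simp add: algebra_simps)
  ultimately have "(a - c *\<^sub>R y) \<bullet> (y' - y) \<le> 0"
    using assms(3) by (simp add: mult_le_0_iff)
  then show ?thesis by (simp add: inner_diff_right)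
qed

(* The centre is a fixed point of the map sending x
   to the mean of the k_i minus c times the mean of the y_i. *)
lemma nearest_point_equilibrium:
  fixes L :: "'a::euclidean_space set" and k :: "'b \<Rightarrow> 'a" and c :: real
  assumes L: "compact L" "convex L" "L \<noteq> {}" and I: "finite I" "I \<noteq> {}" and c: "c > 0"
  obtains x y where "\<And>i. y i \<in> L" "(\<Sum>i\<in>I. k i - x - c *\<^sub>R y i) = 0"
    "\<And>i y'. y' \<in> L \<Longrightarrow> (k i - x - c *\<^sub>R y i) \<bullet> y' \<le> (k i - x - c *\<^sub>R y i) \<bullet> y i"
proof -
  define m where "m = real (card I)"
  have m: "m > 0" using I unfolding m_def by (simp add: card_gt_0_iff)
  have clL: "closed L" using L(1) by (rule compact_imp_closed)
  define b where "b = (1/m) *\<^sub>R (\<Sum>i\<in>I. k i)"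
  define P where "P i x = closest_point L ((1/c) *\<^sub>R (k i - x))" for i x
  define T where "T x = b - c *\<^sub>R (\<Sum>i\<in>I. (1/m) *\<^sub>R P i x)" for x
  define S where "S = (\<lambda>y. b + (- c) *\<^sub>R y) ` L"
  have PL: "P i x \<in> L" for i x unfolding P_def using closest_point_in_set[OF clL L(3)] .
  have "compact S" unfolding S_def using L(1)
    by (intro compact_continuous_image continuous_intros)
  moreover have "convex S" unfolding S_def by (rule convex_affinity[OF L(2)])
  moreover have "S \<noteq> {}" using L(3) unfolding S_def by simp
  moreover have "continuous_on S T"
  proof -
    have "continuous_on UNIV (closest_point L \<circ> (\<lambda>x. (1/c) *\<^sub>R (k i - x)))" for i
      by (intro continuous_on_compose continuous_intros continuous_on_closest_point L(2,3) clL)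
    then show ?thesis unfolding T_def P_def o_def
      by (intro continuous_intros) (auto intro: continuous_on_subset)
  qed
  moreover have "T \<in> S \<rightarrow> S"
  proof
    fix x
    have "(\<Sum>i\<in>I. (1/m) *\<^sub>R P i x) \<in> L"
      using I(1) L(2) PL m by (intro convex_sum) (auto simp: m_def)
    then show "T x \<in> S" unfolding T_def S_def by force
  qed
  ultimately obtain x where fix_x: "T x = x" using brouwer by blast
  define y where "y i = P i x" for i
  have "m *\<^sub>R T x = (\<Sum>i\<in>I. k i) - c *\<^sub>R (\<Sum>i\<in>I. y i)"
    using m unfolding T_def y_def b_def
    by (simp add: scaleR_sum_right[symmetric] scaleR_diff_right)
  then have "m *\<^sub>R x = (\<Sum>i\<in>I. k i) - c *\<^sub>R (\<Sum>i\<in>I. y i)"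
    using fix_x by simp
  then have "(\<Sum>i\<in>I. k i - x - c *\<^sub>R y i) = 0"
    by (simp add: sum_subtractf scaleR_sum_right sum_constant_scaleR m_def)
  moreover have "(k i - x - c *\<^sub>R y i) \<bullet> y' \<le> (k i - x - c *\<^sub>R y i) \<bullet> y i" if "y' \<in> L" for i y'
    unfolding y_def P_def by (rule closest_point_outer_normal[OF L(2) clL c that])
  moreover have "y i \<in> L" for i unfolding y_def using PL .
  ultimately show ?thesis using that by blast
qed

(* With exactly n+1 points k_i of K and zero-sum outer normals r_i of L at points y_i, shadow
   containment gives  sum r_i.k_i <= n/(n-1) sum r_i.y_i :  for each j the n functionals
   r_i + r_j/n (i <> j) sum to zero, so the basic inequality applies to them, and
   leave-one-out averaging combines the n+1 resulting bounds. *)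
lemma full_simplex_bound:
  fixes K L :: "'a::euclidean_space set" and k r y :: "'b \<Rightarrow> 'a"
  assumes n2: "DIM('a) \<ge> 2"
    and shadow: "\<And>u. norm u = 1 \<Longrightarrow> \<exists>w. (\<lambda>x. x + w) ` proj_perp u K \<subseteq> proj_perp u L"
    and I: "finite I" "card I = DIM('a) + 1" and kK: "\<And>i. i \<in> I \<Longrightarrow> k i \<in> K"
    and zero_sum: "(\<Sum>i\<in>I. r i) = 0"
    and support: "\<And>i y'. i \<in> I \<Longrightarrow> y' \<in> L \<Longrightarrow> r i \<bullet> y' \<le> r i \<bullet> y i"
  shows "(\<Sum>i\<in>I. r i \<bullet> k i) \<le> real DIM('a) / (real DIM('a) - 1) * (\<Sum>i\<in>I. r i \<bullet> y i)"
proof -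
  define n where "n = real DIM('a)"
  define Y where "Y = (\<Sum>i\<in>I. r i \<bullet> y i)"
  have n: "n > 1" using n2 unfolding n_def by simp
  have "(\<Sum>i\<in>I. r i \<bullet> k i) \<le> n / (n - 1) * Y"
  proof (rule leave_one_out_average[OF I(1) _ n zero_sum])
    show "real (card I) = n + 1" using I(2) unfolding n_def by simp
    fix j assume j: "j \<in> I"
    define z where "z i = r i + (1/n) *\<^sub>R r j" for i
    have card_J: "card (I - {j}) = DIM('a)" using I j by simp
    have "(\<Sum>i\<in>I-{j}. z i) = (\<Sum>i\<in>I-{j}. r i) + r j"
      using card_J n by (simp add: z_def sum.distrib sum_constant_scaleR n_def)
    also have "\<dots> = 0" using zero_sum I(1) j by (simp add: sum_diff1)
    finally have z_sum: "(\<Sum>i\<in>I-{j}. z i) = 0" .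
    have "(\<Sum>i\<in>I-{j}. z i \<bullet> k i) \<le> (\<Sum>i\<in>I-{j}. r i \<bullet> y i + (1/n) * (r j \<bullet> y j))"
    proof (rule zero_sum_shadow_bound[OF shadow _ _ z_sum])
      fix i y' assume "i \<in> I - {j}" "y' \<in> L"
      then have "r i \<bullet> y' \<le> r i \<bullet> y i" "r j \<bullet> y' \<le> r j \<bullet> y j"
        using support j by auto
      then have "r i \<bullet> y' \<le> r i \<bullet> y i" "(1/n) * (r j \<bullet> y') \<le> (1/n) * (r j \<bullet> y j)"
        using n by (simp_all add: divide_right_mono)
      then show "z i \<bullet> y' \<le> r i \<bullet> y i + (1/n) * (r j \<bullet> y j)"
        by (simp add: z_def inner_add_left)
    qed (use I(1) card_J kK in auto)
    also have "\<dots> = Y"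
      using card_J n I(1) j by (simp add: sum.distrib n_def Y_def sum_diff1)
    finally show "(\<Sum>i\<in>I-{j}. (r i + (1/n) *\<^sub>R r j) \<bullet> k i) \<le> Y" unfolding z_def .
  qed
  then show ?thesis unfolding n_def Y_def .
qed

(* With at most n points the basic inequality already
   gives the bound with factor 1, and  sum r_i.y_i >= 0  because the r_i sum to zero. *)
lemma equilibrium_bound:
  fixes K L :: "'a::euclidean_space set" and k r y :: "'b \<Rightarrow> 'a"
  assumes n2: "DIM('a) \<ge> 2"
    and shadow: "\<And>u. norm u = 1 \<Longrightarrow> \<exists>w. (\<lambda>x. x + w) ` proj_perp u K \<subseteq> proj_perp u L"
    and I: "finite I" "card I \<le> DIM('a) + 1" and kK: "\<And>i. i \<in> I \<Longrightarrow> k i \<in> K"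
    and zero_sum: "(\<Sum>i\<in>I. r i) = 0"
    and yL: "\<And>i. i \<in> I \<Longrightarrow> y i \<in> L"
    and support: "\<And>i y'. i \<in> I \<Longrightarrow> y' \<in> L \<Longrightarrow> r i \<bullet> y' \<le> r i \<bullet> y i"
  shows "(\<Sum>i\<in>I. r i \<bullet> k i) \<le> real DIM('a) / (real DIM('a) - 1) * (\<Sum>i\<in>I. r i \<bullet> y i)"
proof (cases "card I = DIM('a) + 1")
  case True
  show ?thesis
    by (rule full_simplex_bound[OF n2 shadow I(1) True _ zero_sum]) (use kK support in auto)
next
  case False
  then have small: "card I \<le> DIM('a)" using I(2) by simp
  define Y where "Y = (\<Sum>i\<in>I. r i \<bullet> y i)"
  have "(\<Sum>i\<in>I. r i \<bullet> k i) \<le> Y"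
    unfolding Y_def using zero_sum_shadow_bound[OF shadow I(1) small zero_sum kK support] .
  moreover have Y: "0 \<le> Y"
  proof (cases "I = {}")
    case False
    then obtain i0 where "i0 \<in> I" by blast
    then have "(\<Sum>i\<in>I. r i \<bullet> y i0) \<le> Y" unfolding Y_def using support yL by (intro sum_mono) blast
    then show ?thesis using zero_sum by (simp add: inner_sum_left[symmetric])
  qed (simp add: Y_def)
  moreover have "1 \<le> real DIM('a) / (real DIM('a) - 1)" using n2 by simp
  then have "Y \<le> real DIM('a) / (real DIM('a) - 1) * Y" using mult_right_mono[OF _ Y] by fastforce
  ultimately show ?thesis unfolding Y_def by linarith
qed

(* Any at most n+1 points of K lie in a common translate of (n/(n-1)) L: the residuals of the
   equilibrium vanish, since their squared norms sum to the slack in the equilibrium bound. *)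
lemma points_in_homothet:
  fixes K L :: "'a::euclidean_space set"
  assumes n2: "DIM('a) \<ge> 2" and L: "compact L" "convex L"
    and shadow: "\<And>u. norm u = 1 \<Longrightarrow> \<exists>w. (\<lambda>x. x + w) ` proj_perp u K \<subseteq> proj_perp u L"
    and F: "F \<subseteq> K" "finite F" "card F \<le> DIM('a) + 1"
  shows "\<exists>x. F \<subseteq> (\<lambda>y. (real DIM('a) / (real DIM('a) - 1)) *\<^sub>R y + x) ` L"
proof (cases "F = {}")
  case False
  define c where "c = real DIM('a) / (real DIM('a) - 1)"
  have c: "c > 0" using n2 unfolding c_def by (simp add: field_simps)
  have "L \<noteq> {}"
  proof -
    obtain b :: 'a where "b \<in> Basis" using nonempty_Basis by blast
    then obtain w where "(\<lambda>x. x + w) ` proj_perp b K \<subseteq> proj_perp b L"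
      using shadow norm_Basis by blast
    then show ?thesis using False F(1) unfolding proj_perp_def by auto
  qed
  then obtain x y where yL: "\<And>p. y p \<in> L" and zero_sum: "(\<Sum>p\<in>F. p - x - c *\<^sub>R y p) = 0"
    and support: "\<And>p y'. y' \<in> L \<Longrightarrow> (p - x - c *\<^sub>R y p) \<bullet> y' \<le> (p - x - c *\<^sub>R y p) \<bullet> y p"
    by (rule nearest_point_equilibrium[OF L _ F(2) False c, where k = "\<lambda>p. p"]) blast
  define r where "r p = p - x - c *\<^sub>R y p" for p
  have r_sum: "(\<Sum>p\<in>F. r p) = 0" using zero_sum unfolding r_def .
  have r_support: "r p \<bullet> y' \<le> r p \<bullet> y p" if "y' \<in> L" for p y'
    using support[OF that] unfolding r_def .
  have "(\<Sum>p\<in>F. r p \<bullet> p) \<le> c * (\<Sum>p\<in>F. r p \<bullet> y p)"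
    unfolding c_def
    by (rule equilibrium_bound[OF n2 shadow F(2,3) _ r_sum, where k = "\<lambda>p. p"])
      (use F(1) yL r_support in auto)
  moreover have "(\<Sum>p\<in>F. r p \<bullet> p) = (\<Sum>p\<in>F. r p \<bullet> r p) + c * (\<Sum>p\<in>F. r p \<bullet> y p)"
  proof -
    have "r p \<bullet> p = r p \<bullet> r p + r p \<bullet> x + c * (r p \<bullet> y p)" for p
      unfolding r_def by (simp add: inner_diff_right inner_add_right algebra_simps)
    then have "(\<Sum>p\<in>F. r p \<bullet> p) = (\<Sum>p\<in>F. r p \<bullet> r p) + (\<Sum>p\<in>F. r p) \<bullet> x + c * (\<Sum>p\<in>F. r p \<bullet> y p)"
      by (simp add: sum.distrib sum_distrib_left inner_sum_left)
    then show ?thesis using r_sum by simp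
  qed
  ultimately have "(\<Sum>p\<in>F. r p \<bullet> r p) \<le> 0" by linarith
  then have "(\<Sum>p\<in>F. r p \<bullet> r p) = 0" by (intro antisym sum_nonneg) simp_all
  then have "r p = 0" if "p \<in> F" for p
    using F(2) that by (simp add: sum_nonneg_eq_0_iff)
  then have "p = c *\<^sub>R y p + x" if "p \<in> F" for p
    using that unfolding r_def by (simp add: algebra_simps)
  then have "F \<subseteq> (\<lambda>y. c *\<^sub>R y + x) ` L"
    using yL by blast
  then show ?thesis unfolding c_def ..
qed simp

(* Helly's theorem for an arbitrary family of compact convex sets: combine the finite version
   with the finite intersection property of compact sets. *)
lemma Helly_compact:
  fixes \<F> :: "'a::euclidean_space set set"
  assumes "\<And>S. S \<in> \<F> \<Longrightarrow> compact S \<and> convex S"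
    and "\<And>\<G>. \<G> \<subseteq> \<F> \<Longrightarrow> finite \<G> \<Longrightarrow> card \<G> \<le> DIM('a) + 1 \<Longrightarrow> \<Inter>\<G> \<noteq> {}"
  shows "\<Inter>\<F> \<noteq> {}"
proof (rule compact_fip_Heine_Borel)
  fix \<G> assume \<G>: "finite \<G>" "\<G> \<subseteq> \<F>"
  show "\<Inter>\<G> \<noteq> {}"
  proof (cases "card \<G> \<le> DIM('a) + 1")
    case True
    then show ?thesis using assms(2) \<G> by blast
  next
    case False
    show ?thesis
    proof (rule Helly)
      show "DIM('a) + 1 \<le> card \<G>" "\<forall>S\<in>\<G>. convex S" using False \<G>(2) assms(1) by auto
      show "\<Inter>\<H> \<noteq> {}" if "\<H> \<subseteq> \<G>" "card \<H> = DIM('a) + 1" for \<H>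
        using that \<G> assms(2) finite_subset[of \<H> \<G>] by (metis order_refl subset_trans)
    qed
  qed
qed (use assms(1) in blast)

(* If every set of at most n+1 points of K is covered by a translate of c L (L compact
   convex), then so is all of K: the translates c L + x containing p form, as sets of x, the
   compact convex sets p - c L, and Helly applies. *)
lemma homothet_cover_from_finite_subsets:
  fixes K L :: "'a::euclidean_space set" and c :: real
  assumes "compact L" "convex L"
    and small: "\<And>F. F \<subseteq> K \<Longrightarrow> finite F \<Longrightarrow> card F \<le> DIM('a) + 1 \<Longrightarrow>
                   \<exists>x. F \<subseteq> (\<lambda>y. c *\<^sub>R y + x) ` L"
  shows "\<exists>x. K \<subseteq> (\<lambda>y. c *\<^sub>R y + x) ` L"
proof -
  define A where "A p = (\<lambda>y. p + (- c) *\<^sub>R y) ` L" for p :: 'a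
  have mem_A: "x \<in> A p \<longleftrightarrow> p \<in> (\<lambda>y. c *\<^sub>R y + x) ` L" for x p
    unfolding A_def by (auto simp: algebra_simps)
  have "\<Inter>(A ` K) \<noteq> {}"
  proof (rule Helly_compact)
    show "compact S \<and> convex S" if S: "S \<in> A ` K" for S
    proof -
      obtain p where "S = A p" using S by blast
      moreover have "compact (A p)" unfolding A_def using assms(1)
        by (intro compact_continuous_image continuous_intros)
      moreover have "convex (A p)" unfolding A_def by (rule convex_affinity[OF assms(2)])
      ultimately show ?thesis by simp
    qed
    fix \<G> assume \<G>: "\<G> \<subseteq> A ` K" "finite \<G>" "card \<G> \<le> DIM('a) + 1"
    then obtain F where F: "F \<subseteq> K" "inj_on A F" "\<G> = A ` F"
      by (auto simp: subset_image_inj)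
    with \<G> have "finite F" "card F \<le> DIM('a) + 1"
      by (auto simp: finite_image_iff card_image)
    then obtain x where "F \<subseteq> (\<lambda>y. c *\<^sub>R y + x) ` L" using small F(1) by blast
    then have "x \<in> \<Inter>\<G>" using F(3) mem_A by blast
    then show "\<Inter>\<G> \<noteq> {}" by blast
  qed
  then obtain x where "x \<in> \<Inter>(A ` K)" by blast
  then have "K \<subseteq> (\<lambda>y. c *\<^sub>R y + x) ` L" using mem_A by blast
  then show ?thesis ..
qed

theorem corollary5p2:
  fixes K L :: "'a::euclidean_space set"
  assumes "DIM('a) \<ge> 2"
    and "compact K" and "convex K" and "compact L" and "convex L"
    and "\<And>u. norm u = 1 \<Longrightarrow> \<exists>w. (\<lambda>x. x + w) ` proj_perp u K \<subseteq> proj_perp u L"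
  shows "measure lebesgue K \<le> (real DIM('a) / (real DIM('a) - 1)) ^ DIM('a) * measure lebesgue L"
proof -
  define c where "c = real DIM('a) / (real DIM('a) - 1)"
  have "c > 0" using assms(1) unfolding c_def by (simp add: field_simps)
  obtain x where cover: "K \<subseteq> (\<lambda>y. c *\<^sub>R y + x) ` L"
    using homothet_cover_from_finite_subsets[OF assms(4,5) points_in_homothet[OF assms(1,4,5,6)]]
    unfolding c_def by blast
  have "compact ((\<lambda>y. c *\<^sub>R y + x) ` L)"
    using assms(4) by (intro compact_continuous_image continuous_intros)
  then have "measure lebesgue K \<le> measure lebesgue ((\<lambda>y. c *\<^sub>R y + x) ` L)"
    using cover lmeasurable_compact[OF assms(2)] lmeasurable_compact
    by (intro measure_mono_fmeasurable) auto
  also have "\<dots> = c ^ DIM('a) * measure lebesgue L"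
    using measure_lebesgue_affine[of c x L] \<open>c > 0\<close> by simp
  finally show ?thesis unfolding c_def .
qed

end
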